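(* Let $\mathbf C$ be an admissible category of lattices. Then the functor $\mathbb P:\mathbf{Conv}\to(\mathbf C^{\mathrm{conv}})^{op}$ is left adjoint to the functor $\mathrm{pt}:(\mathbf C^{\mathrm{conv}})^{op}\to\mathbf{Conv}$; that is, $\mathbb P\dashv\mathrm{pt}$ is an adjunction between $\mathbf{Conv}$ and $(\mathbf C^{\mathrm{conv}})^{op}$.
   Context: An inf-semilattice is a poset with all finite infima (including a top element $\top$). A filter on an inf-semilattice $L$ is a non-empty upward-closed subset of $L$ closed under binary meets; $L$ itself counts as a filter. $\mathbb F L$ is the set of filters on $L$, ordered by inclusion. For a set $X$, $\mathbb P(X)$ is its powerset ordered by inclusion; filters on $\mathbb P(X)$ are called filters of subsets of $X$. Let $\mathbf C$ be a category whose objects are inf-semilattices. A convergence $\mathbf C$-object is a pair $(L,\lim_L)$ where $L$ is a $\mathbf C$-object and $\lim_L:\mathbb F L\to L$ is monotone. The category $\mathbf C^{\mathrm{conv}}$ has these as objects; its morphisms $\varphi:L\to L'$ are the $\mathbf C$-morphisms that are continuous: $\lim_{L'}\mathcal F\le\varphi(\lim_L\varphi^{-1}(\mathcal F))$ for every $\mathcal F\in\mathbb F L'$. $\mathbf C$ is a category of lattices if all its objects are lattices and all its morphisms preserve finite suprema and finite infima. $\mathbf C$ is admissible if $\mathbb P(X)$ is a $\mathbf C$-object for every set $X$, and there are two classes of index sets $\mathcal I,\mathcal J$ such that for all $\mathbf C$-objects $L,L'$ the $\mathbf C$-morphisms $L\to L'$ are exactly the monotone maps preserving all $I$-indexed infima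 existing in $L$ ($I\in\mathcal I$) and all $J$-indexed suprema existing in $L$ ($J\in\mathcal J$). A convergence space is a set $X$ with a relation $\to$ between filters of subsets of $X$ and points of $X$ such that $\dot x\to x$ for all $x$, where $\dot x=\{S\subseteq X: x\in S\}$, and $\mathcal F\to x$, $\mathcal F\subseteq\mathcal G$ imply $\mathcal G\to x$. A map $f:X\to Y$ is continuous if $\mathcal F\to x$ implies $f[\mathcal F]\to f(x)$, where $f[\mathcal F]=\{B\subseteq Y: f^{-1}(B)\in\mathcal F\}$. These form the category $\mathbf{Conv}$. The functor $\mathbb P$ sends a convergence space $X$ to $(\mathbb P(X),\lim_{\mathbb P(X)})$ with $\lim_{\mathbb P(X)}\mathcal F=\{x\in X:\mathcal F\to x\}$, and a continuous map $f$ to $f^{-1}$. Points: let $1=\{*\}$ and $\mathbb P(1)=\{\emptyset,1\}$ with $\lim_{\mathbb P(1)}$ constantly equal to $1$. For a convergence $\mathbf C$-object $L$, $\mathrm{pt}\,L$ is the set of morphisms $L\to\mathbb P(1)$ in $\mathbf C^{\mathrm{conv}}$. For $\ell\in L$ let $\ell^\bullet=\{\varphi\in\mathrm{pt}\,L:\varphi(\ell)=1\}$; for a filter $\mathcal F$ of subsets of $\mathrm{pt}\,L$ let $\mathcal F^\circ=\{\ell\in L:\ell^\bullet\in\mathcal F\}$. The convergence on $\mathrm{pt}\,L$ is: $\mathcal F\to\varphi$ iff $\varphi\in(\lim_L\mathcal F^\circ)^\bullet$. On a morphism $\varphi:L\to L'$ of $\mathbf C^{\mathrm{conv}}$, $\mathrm{pt}\,\varphi:\mathrm{pt}\,L'\to\mathrm{pt}\,L$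 is $\psi\mapsto\psi\circ\varphi$. *)

theory Defs
  imports Main "HOL-Library.FuncSet"
begin

definition is_inf :: "'a set \<Rightarrow> ('a \<Rightarrow> 'a \<Rightarrow> bool) \<Rightarrow> 'a set \<Rightarrow> 'a \<Rightarrow> bool" where
  "is_inf A le S m \<longleftrightarrow> m \<in> A \<and> (\<forall>s\<in>S. le m s) \<and> (\<forall>z\<in>A. (\<forall>s\<in>S. le z s) \<longrightarrow> le z m)"

definition is_sup :: "'a set \<Rightarrow> ('a \<Rightarrow> 'a \<Rightarrow> bool) \<Rightarrow> 'a set \<Rightarrow> 'a \<Rightarrow> bool" where
  "is_sup A le S m \<longleftrightarrow> m \<in> A \<and> (\<forall>s\<in>S. le s m) \<and> (\<forall>z\<in>A. (\<forall>s\<in>S. le s z) \<longrightarrow> le m z)"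

definition bounded_lattice :: "'a set \<Rightarrow> ('a \<Rightarrow> 'a \<Rightarrow> bool) \<Rightarrow> bool" where
  "bounded_lattice A le \<longleftrightarrow>
     (\<forall>a\<in>A. le a a) \<and> (\<forall>a\<in>A. \<forall>b\<in>A. le a b \<and> le b a \<longrightarrow> a = b) \<and>
     (\<forall>a\<in>A. \<forall>b\<in>A. \<forall>c\<in>A. le a b \<and> le b c \<longrightarrow> le a c) \<and>
     (\<forall>S. S \<subseteq> A \<and> finite S \<longrightarrow> (\<exists>m. is_inf A le S m) \<and> (\<exists>m. is_sup A le S m))"

text \<open>Filters on an inf-semilattice (the whole carrier counts as a filter).\<close>
definition lfilter :: "'a set \<Rightarrow> ('a \<Rightarrow> 'a \<Rightarrow> bool) \<Rightarrow> 'a set \<Rightarrow> bool" where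
  "lfilter A le F \<longleftrightarrow> F \<noteq> {} \<and> F \<subseteq> A \<and> (\<forall>a\<in>F. \<forall>b\<in>A. le a b \<longrightarrow> b \<in> F) \<and>
     (\<forall>a\<in>F. \<forall>b\<in>F. \<forall>m. is_inf A le {a, b} m \<longrightarrow> m \<in> F)"

text \<open>Morphisms of the admissible category C determined by the classes II, JJ of index sets:
  monotone maps preserving all II-indexed infima and JJ-indexed suprema that exist.\<close>
definition C_hom :: "'i set set \<Rightarrow> 'j set set \<Rightarrow> 'a set \<Rightarrow> ('a \<Rightarrow> 'a \<Rightarrow> bool)
     \<Rightarrow> 'b set \<Rightarrow> ('b \<Rightarrow> 'b \<Rightarrow> bool) \<Rightarrow> ('a \<Rightarrow> 'b) \<Rightarrow> bool" where
  "C_hom II JJ A leA B leB \<phi> \<longleftrightarrow> \<phi> \<in> A \<rightarrow>\<^sub>E B \<and>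
     (\<forall>a\<in>A. \<forall>b\<in>A. leA a b \<longrightarrow> leB (\<phi> a) (\<phi> b)) \<and>
     (\<forall>I\<in>II. \<forall>x \<in> I \<rightarrow> A. \<forall>m. is_inf A leA (x ` I) m \<longrightarrow> is_inf B leB ((\<phi> \<circ> x) ` I) (\<phi> m)) \<and>
     (\<forall>J\<in>JJ. \<forall>x \<in> J \<rightarrow> A. \<forall>m. is_sup A leA (x ` J) m \<longrightarrow> is_sup B leB ((\<phi> \<circ> x) ` J) (\<phi> m))"

definition lattice_homs :: "'i set set \<Rightarrow> 'j set set \<Rightarrow> 'a set \<Rightarrow> ('a \<Rightarrow> 'a \<Rightarrow> bool)
     \<Rightarrow> 'b set \<Rightarrow> ('b \<Rightarrow> 'b \<Rightarrow> bool) \<Rightarrow> bool" where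
  "lattice_homs II JJ A leA B leB \<longleftrightarrow> (\<forall>\<phi>. C_hom II JJ A leA B leB \<phi> \<longrightarrow>
     (\<forall>S m. S \<subseteq> A \<and> finite S \<longrightarrow>
        (is_inf A leA S m \<longrightarrow> is_inf B leB (\<phi> ` S) (\<phi> m)) \<and>
        (is_sup A leA S m \<longrightarrow> is_sup B leB (\<phi> ` S) (\<phi> m))))"

abbreviation P1 :: "unit set set" where "P1 \<equiv> Pow UNIV"

text \<open>The full subcategory of C on the objects L, M, P(X), P(Y), P(1) is a category of lattices:
  all objects are lattices and all C-morphisms between them preserve finite infima and suprema.\<close>
definition lattice_cat_on :: "'i set set \<Rightarrow> 'j set set \<Rightarrow> 'l set \<Rightarrow> ('l \<Rightarrow> 'l \<Rightarrow> bool)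
     \<Rightarrow> 'm set \<Rightarrow> ('m \<Rightarrow> 'm \<Rightarrow> bool) \<Rightarrow> 'x set \<Rightarrow> 'y set \<Rightarrow> bool" where
  "lattice_cat_on II JJ L leL M leM X Y \<longleftrightarrow>
     bounded_lattice L leL \<and> bounded_lattice M leM \<and>
     lattice_homs II JJ L leL L leL \<and> lattice_homs II JJ L leL M leM \<and>
     lattice_homs II JJ L leL (Pow X) (\<subseteq>) \<and> lattice_homs II JJ L leL (Pow Y) (\<subseteq>) \<and>
     lattice_homs II JJ L leL P1 (\<subseteq>) \<and>
     lattice_homs II JJ M leM L leL \<and> lattice_homs II JJ M leM M leM \<and>
     lattice_homs II JJ M leM (Pow X) (\<subseteq>) \<and> lattice_homs II JJ M leM (Pow Y) (\<subseteq>) \<and>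
     lattice_homs II JJ M leM P1 (\<subseteq>) \<and>
     lattice_homs II JJ (Pow X) (\<subseteq>) L leL \<and> lattice_homs II JJ (Pow X) (\<subseteq>) M leM \<and>
     lattice_homs II JJ (Pow X) (\<subseteq>) (Pow X) (\<subseteq>) \<and> lattice_homs II JJ (Pow X) (\<subseteq>) (Pow Y) (\<subseteq>) \<and>
     lattice_homs II JJ (Pow X) (\<subseteq>) P1 (\<subseteq>) \<and>
     lattice_homs II JJ (Pow Y) (\<subseteq>) L leL \<and> lattice_homs II JJ (Pow Y) (\<subseteq>) M leM \<and>
     lattice_homs II JJ (Pow Y) (\<subseteq>) (Pow X) (\<subseteq>) \<and> lattice_homs II JJ (Pow Y) (\<subseteq>) (Pow Y) (\<subseteq>) \<and>
     lattice_homs II JJ (Pow Y) (\<subseteq>) P1 (\<subseteq>) \<and>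
     lattice_homs II JJ P1 (\<subseteq>) L leL \<and> lattice_homs II JJ P1 (\<subseteq>) M leM \<and>
     lattice_homs II JJ P1 (\<subseteq>) (Pow X) (\<subseteq>) \<and> lattice_homs II JJ P1 (\<subseteq>) (Pow Y) (\<subseteq>) \<and>
     lattice_homs II JJ P1 (\<subseteq>) P1 (\<subseteq>)"

definition conv_obj :: "'a set \<Rightarrow> ('a \<Rightarrow> 'a \<Rightarrow> bool) \<Rightarrow> ('a set \<Rightarrow> 'a) \<Rightarrow> bool" where
  "conv_obj A le lim \<longleftrightarrow> bounded_lattice A le \<and>
     (\<forall>F. lfilter A le F \<longrightarrow> lim F \<in> A) \<and>
     (\<forall>F G. lfilter A le F \<and> lfilter A le G \<and> F \<subseteq> G \<longrightarrow> le (lim F) (lim G))"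

definition continuous_map :: "'a set \<Rightarrow> ('a set \<Rightarrow> 'a) \<Rightarrow> 'b set \<Rightarrow> ('b \<Rightarrow> 'b \<Rightarrow> bool)
     \<Rightarrow> ('b set \<Rightarrow> 'b) \<Rightarrow> ('a \<Rightarrow> 'b) \<Rightarrow> bool" where
  "continuous_map A limA B leB limB \<phi> \<longleftrightarrow>
     (\<forall>F. lfilter B leB F \<longrightarrow> leB (limB F) (\<phi> (limA {a \<in> A. \<phi> a \<in> F})))"

definition cconv_hom :: "'i set set \<Rightarrow> 'j set set \<Rightarrow> 'a set \<Rightarrow> ('a \<Rightarrow> 'a \<Rightarrow> bool) \<Rightarrow> ('a set \<Rightarrow> 'a)
     \<Rightarrow> 'b set \<Rightarrow> ('b \<Rightarrow> 'b \<Rightarrow> bool) \<Rightarrow> ('b set \<Rightarrow> 'b) \<Rightarrow> ('a \<Rightarrow> 'b) set" where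
  "cconv_hom II JJ A leA limA B leB limB =
     {\<phi>. C_hom II JJ A leA B leB \<phi> \<and> continuous_map A limA B leB limB \<phi>}"

text \<open>Convergence spaces (filters of subsets of X are the filters on the lattice Pow X).\<close>
definition dot :: "'x set \<Rightarrow> 'x \<Rightarrow> 'x set set" where
  "dot X x = {S \<in> Pow X. x \<in> S}"

definition conv_space :: "'x set \<Rightarrow> ('x set set \<Rightarrow> 'x \<Rightarrow> bool) \<Rightarrow> bool" where
  "conv_space X c \<longleftrightarrow>
     (\<forall>F x. c F x \<longrightarrow> lfilter (Pow X) (\<subseteq>) F \<and> x \<in> X) \<and>
     (\<forall>x\<in>X. c (dot X x) x) \<and>
     (\<forall>F G x. c F x \<and> lfilter (Pow X) (\<subseteq>) G \<and> F \<subseteq> G \<longrightarrow> c G x)"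

definition fimg :: "'x set \<Rightarrow> 'y set \<Rightarrow> ('x \<Rightarrow> 'y) \<Rightarrow> 'x set set \<Rightarrow> 'y set set" where
  "fimg X Y f F = {B \<in> Pow Y. {x \<in> X. f x \<in> B} \<in> F}"

definition conv_hom :: "'x set \<Rightarrow> ('x set set \<Rightarrow> 'x \<Rightarrow> bool) \<Rightarrow> 'y set \<Rightarrow> ('y set set \<Rightarrow> 'y \<Rightarrow> bool)
     \<Rightarrow> ('x \<Rightarrow> 'y) set" where
  "conv_hom X cX Y cY = {f \<in> X \<rightarrow>\<^sub>E Y. \<forall>F x. cX F x \<longrightarrow> cY (fimg X Y f F) (f x)}"

definition Plim :: "'x set \<Rightarrow> ('x set set \<Rightarrow> 'x \<Rightarrow> bool) \<Rightarrow> 'x set set \<Rightarrow> 'x set" where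
  "Plim X c F = {x \<in> X. c F x}"

definition Pmap :: "'x set \<Rightarrow> 'y set \<Rightarrow> ('x \<Rightarrow> 'y) \<Rightarrow> 'y set \<Rightarrow> 'x set" where
  "Pmap X Y f = (\<lambda>S \<in> Pow Y. {x \<in> X. f x \<in> S})"

definition pt :: "'i set set \<Rightarrow> 'j set set \<Rightarrow> 'a set \<Rightarrow> ('a \<Rightarrow> 'a \<Rightarrow> bool) \<Rightarrow> ('a set \<Rightarrow> 'a)
     \<Rightarrow> ('a \<Rightarrow> unit set) set" where
  "pt II JJ A le lim = cconv_hom II JJ A le lim P1 (\<subseteq>) (\<lambda>_. UNIV)"

definition bul :: "'i set set \<Rightarrow> 'j set set \<Rightarrow> 'a set \<Rightarrow> ('a \<Rightarrow> 'a \<Rightarrow> bool) \<Rightarrow> ('a set \<Rightarrow> 'a)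
     \<Rightarrow> 'a \<Rightarrow> ('a \<Rightarrow> unit set) set" where
  "bul II JJ A le lim l = {\<phi> \<in> pt II JJ A le lim. \<phi> l = UNIV}"

definition circ :: "'i set set \<Rightarrow> 'j set set \<Rightarrow> 'a set \<Rightarrow> ('a \<Rightarrow> 'a \<Rightarrow> bool) \<Rightarrow> ('a set \<Rightarrow> 'a)
     \<Rightarrow> ('a \<Rightarrow> unit set) set set \<Rightarrow> 'a set" where
  "circ II JJ A le lim F = {l \<in> A. bul II JJ A le lim l \<in> F}"

definition ptconv :: "'i set set \<Rightarrow> 'j set set \<Rightarrow> 'a set \<Rightarrow> ('a \<Rightarrow> 'a \<Rightarrow> bool) \<Rightarrow> ('a set \<Rightarrow> 'a)
     \<Rightarrow> ('a \<Rightarrow> unit set) set set \<Rightarrow> ('a \<Rightarrow> unit set) \<Rightarrow> bool" where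
  "ptconv II JJ A le lim F \<phi> \<longleftrightarrow> lfilter (Pow (pt II JJ A le lim)) (\<subseteq>) F \<and>
     \<phi> \<in> bul II JJ A le lim (lim (circ II JJ A le lim F))"

definition ptmap :: "'i set set \<Rightarrow> 'j set set \<Rightarrow> 'b set \<Rightarrow> ('b \<Rightarrow> 'b \<Rightarrow> bool) \<Rightarrow> ('b set \<Rightarrow> 'b)
     \<Rightarrow> 'a set \<Rightarrow> ('a \<Rightarrow> 'b) \<Rightarrow> ('b \<Rightarrow> unit set) \<Rightarrow> ('a \<Rightarrow> unit set)" where
  "ptmap II JJ B leB limB A \<psi> = (\<lambda>\<chi> \<in> pt II JJ B leB limB. restrict (\<chi> \<circ> \<psi>) A)"

definition eta :: "'x set \<Rightarrow> 'x \<Rightarrow> 'x set \<Rightarrow> unit set" where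
  "eta X x = (\<lambda>S \<in> Pow X. if x \<in> S then UNIV else {})"

text \<open>The hom-set map \<open>Hom_{C^conv}(L, P X) \<rightarrow> Hom_Conv(X, pt L)\<close>, \<open>\<phi> \<mapsto> pt \<phi> \<circ> \<eta>_X\<close>.\<close>
definition transp :: "'i set set \<Rightarrow> 'j set set \<Rightarrow> 'x set \<Rightarrow> ('x set set \<Rightarrow> 'x \<Rightarrow> bool)
     \<Rightarrow> 'a set \<Rightarrow> ('a \<Rightarrow> 'x set) \<Rightarrow> 'x \<Rightarrow> 'a \<Rightarrow> unit set" where
  "transp II JJ X c A \<phi> = restrict (ptmap II JJ (Pow X) (\<subseteq>) (Plim X c) A \<phi> \<circ> eta X) X"

end

theory Submission
  imports Defs
begin

(* A map \<phi> : L \<rightarrow> P(X) and a map g : X \<rightarrow> (L \<rightarrow> P(1)) determine each other by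
   g x l = 1 \<longleftrightarrow> x \<in> \<phi> l.  Infima and suprema in P(X) are computed pointwise along the
   evaluations \<eta>\<^sub>x : P(X) \<rightarrow> P(1), so \<phi> is a C-morphism iff every g x is.  Each \<eta>\<^sub>x is a point
   of P(X) because the point filter of x converges to x; hence g x = \<eta>\<^sub>x \<circ> \<phi> is a point of L
   whenever \<phi> is a morphism of C^conv.  For a filter F of subsets of X, the filter (g[F])\<^sup>\<circ> on L
   is exactly the preimage of F under \<phi>, so continuity of \<phi> and convergence preservation of g
   are the same condition.  Naturality is a pointwise computation. *)

lemma is_inf_Pow:
  assumes "S \<subseteq> Pow X"
  shows "is_inf (Pow X) (\<subseteq>) S m \<longleftrightarrow> m = X \<inter> \<Inter>S"
proof
  assume inf: "is_inf (Pow X) (\<subseteq>) S m"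
  have "X \<inter> \<Inter>S \<in> Pow X" "\<forall>s\<in>S. X \<inter> \<Inter>S \<subseteq> s" by auto
  then have "X \<inter> \<Inter>S \<subseteq> m" using inf unfolding is_inf_def by (simp only: Ball_def)
  moreover have "m \<subseteq> X \<inter> \<Inter>S" using inf unfolding is_inf_def by auto
  ultimately show "m = X \<inter> \<Inter>S" by (rule subset_antisym[rotated])
qed (auto simp: is_inf_def)

lemma is_sup_Pow:
  assumes "S \<subseteq> Pow X"
  shows "is_sup (Pow X) (\<subseteq>) S m \<longleftrightarrow> m = \<Union>S"
proof
  assume sup: "is_sup (Pow X) (\<subseteq>) S m"
  have "\<Union>S \<in> Pow X" "\<forall>s\<in>S. s \<subseteq> \<Union>S" using assms by auto
  then have "m \<subseteq> \<Union>S" using sup unfolding is_sup_def by (simp only: Ball_def)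
  moreover have "\<Union>S \<subseteq> m" using sup unfolding is_sup_def by auto
  ultimately show "m = \<Union>S" by (rule subset_antisym)
qed (use assms in \<open>auto simp: is_sup_def\<close>)

lemma is_inf_UNIV: "is_inf (UNIV :: 'a set set) (\<subseteq>) S m \<longleftrightarrow> m = \<Inter>S"
  using is_inf_Pow[of S UNIV m] by simp

lemma is_sup_UNIV: "is_sup (UNIV :: 'a set set) (\<subseteq>) S m \<longleftrightarrow> m = \<Union>S"
  using is_sup_Pow[of S UNIV m] by simp

lemma bounded_lattice_Pow: "bounded_lattice (Pow X) (\<subseteq>)"
  unfolding bounded_lattice_def
proof (intro conjI allI impI)
  fix S assume "S \<subseteq> Pow X \<and> finite S"
  then show "\<exists>m. is_inf (Pow X) (\<subseteq>) S m" "\<exists>m. is_sup (Pow X) (\<subseteq>) S m"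
    using is_inf_Pow[of S X] is_sup_Pow[of S X] by blast+
qed auto

lemma lfilter_Pow:
  "lfilter (Pow X) (\<subseteq>) F \<longleftrightarrow> F \<noteq> {} \<and> F \<subseteq> Pow X \<and>
     (\<forall>a\<in>F. \<forall>b\<in>Pow X. a \<subseteq> b \<longrightarrow> b \<in> F) \<and> (\<forall>a\<in>F. \<forall>b\<in>F. a \<inter> b \<in> F)"
proof (cases "F \<subseteq> Pow X")
  case True
  have "is_inf (Pow X) (\<subseteq>) {a, b} m \<longleftrightarrow> m = a \<inter> b" if "a \<in> F" "b \<in> F" for a b m
    using that True is_inf_Pow[of "{a, b}" X m] by auto
  then show ?thesis unfolding lfilter_def by simp
qed (simp add: lfilter_def)

lemma lfilter_Pow_top: "lfilter (Pow X) (\<subseteq>) F \<Longrightarrow> X \<in> F"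
  unfolding lfilter_Pow by blast

lemma lfilter_fimg:
  assumes f: "f \<in> X \<rightarrow> Y" and F: "lfilter (Pow X) (\<subseteq>) F"
  shows "lfilter (Pow Y) (\<subseteq>) (fimg X Y f F)"
  unfolding lfilter_Pow
proof (intro conjI ballI allI impI)
  have "{x \<in> X. f x \<in> Y} = X" using f by auto
  then show "fimg X Y f F \<noteq> {}" unfolding fimg_def using lfilter_Pow_top[OF F] by auto
  show "fimg X Y f F \<subseteq> Pow Y" unfolding fimg_def by auto
next
  fix a b assume a: "a \<in> fimg X Y f F" and "b \<in> Pow Y" "a \<subseteq> b"
  then have "{x \<in> X. f x \<in> a} \<in> F" "{x \<in> X. f x \<in> a} \<subseteq> {x \<in> X. f x \<in> b}" "b \<subseteq> Y"
    unfolding fimg_def by auto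
  moreover have "{x \<in> X. f x \<in> b} \<in> Pow X" by auto
  ultimately have "{x \<in> X. f x \<in> b} \<in> F" using F unfolding lfilter_Pow by blast
  then show "b \<in> fimg X Y f F" using \<open>b \<subseteq> Y\<close> unfolding fimg_def by auto
next
  fix a b assume "a \<in> fimg X Y f F" "b \<in> fimg X Y f F"
  then have "{x \<in> X. f x \<in> a} \<inter> {x \<in> X. f x \<in> b} \<in> F" "a \<inter> b \<subseteq> Y"
    using F unfolding fimg_def lfilter_Pow by auto
  moreover have "{x \<in> X. f x \<in> a} \<inter> {x \<in> X. f x \<in> b} = {x \<in> X. f x \<in> a \<inter> b}" by auto
  ultimately show "a \<inter> b \<in> fimg X Y f F" unfolding fimg_def by auto
qed

lemma conv_obj_bounded_lattice: "conv_obj A le lim \<Longrightarrow> bounded_lattice A le"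
  unfolding conv_obj_def by blast

lemma conv_obj_lim: "conv_obj A le lim \<Longrightarrow> lfilter A le F \<Longrightarrow> lim F \<in> A"
  unfolding conv_obj_def by blast

lemma conv_obj_mono:
  "conv_obj A le lim \<Longrightarrow> lfilter A le F \<Longrightarrow> lfilter A le G \<Longrightarrow> F \<subseteq> G \<Longrightarrow> le (lim F) (lim G)"
  unfolding conv_obj_def by blast

lemma bounded_lattice_trans:
  "bounded_lattice A le \<Longrightarrow> a \<in> A \<Longrightarrow> b \<in> A \<Longrightarrow> c \<in> A \<Longrightarrow> le a b \<Longrightarrow> le b c \<Longrightarrow> le a c"
  unfolding bounded_lattice_def by blast

lemma conv_obj_Pow:
  assumes "conv_space X c"
  shows "conv_obj (Pow X) (\<subseteq>) (Plim X c)"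
  unfolding conv_obj_def
proof (intro conjI allI impI)
  fix F G assume "lfilter (Pow X) (\<subseteq>) F \<and> lfilter (Pow X) (\<subseteq>) G \<and> F \<subseteq> G"
  then have "c F x \<Longrightarrow> c G x" for x using assms unfolding conv_space_def by blast
  then show "Plim X c F \<subseteq> Plim X c G" unfolding Plim_def by auto
qed (auto simp: bounded_lattice_Pow Plim_def)

lemma conv_obj_P1: "conv_obj P1 (\<subseteq>) (\<lambda>_. UNIV)"
  unfolding conv_obj_def using bounded_lattice_Pow[of "UNIV :: unit set"] by auto

lemma conv_space_D: "conv_space X c \<Longrightarrow> c F x \<Longrightarrow> lfilter (Pow X) (\<subseteq>) F \<and> x \<in> X"
  unfolding conv_space_def by blast

lemma unit_set_cases: "(u :: unit set) = {} \<or> u = UNIV"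
  by auto

lemma unit_set_eq_iff: "(u :: unit set) = v \<longleftrightarrow> (() \<in> u \<longleftrightarrow> () \<in> v)"
  by (auto simp: set_eq_iff)

lemma unit_in_eta_iff: "S \<subseteq> X \<Longrightarrow> () \<in> eta X x S \<longleftrightarrow> x \<in> S"
  by (simp add: eta_def)

lemma is_inf_Pow_pointwise:
  assumes "S \<subseteq> Pow X" "m \<subseteq> X"
  shows "is_inf (Pow X) (\<subseteq>) S m \<longleftrightarrow> (\<forall>x\<in>X. is_inf P1 (\<subseteq>) (eta X x ` S) (eta X x m))"
proof -
  have "() \<in> eta X x s \<longleftrightarrow> x \<in> s" if "s \<in> S" for x s
    using that assms(1) by (intro unit_in_eta_iff) blast
  then have "eta X x m = \<Inter>(eta X x ` S) \<longleftrightarrow> (x \<in> m \<longleftrightarrow> (\<forall>s\<in>S. x \<in> s))" for x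
    using assms(2) by (auto simp: unit_set_eq_iff unit_in_eta_iff)
  moreover have "m = X \<inter> \<Inter>S \<longleftrightarrow> (\<forall>x\<in>X. x \<in> m \<longleftrightarrow> (\<forall>s\<in>S. x \<in> s))"
    using assms(2) by blast
  ultimately show ?thesis
    by (simp only: is_inf_Pow[OF assms(1)] Pow_UNIV is_inf_UNIV)
qed

lemma is_sup_Pow_pointwise:
  assumes "S \<subseteq> Pow X" "m \<subseteq> X"
  shows "is_sup (Pow X) (\<subseteq>) S m \<longleftrightarrow> (\<forall>x\<in>X. is_sup P1 (\<subseteq>) (eta X x ` S) (eta X x m))"
proof -
  have "() \<in> eta X x s \<longleftrightarrow> x \<in> s" if "s \<in> S" for x s
    using that assms(1) by (intro unit_in_eta_iff) blast
  then have "eta X x m = \<Union>(eta X x ` S) \<longleftrightarrow> (x \<in> m \<longleftrightarrow> (\<exists>s\<in>S. x \<in> s))" for x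
    using assms(2) by (auto simp: unit_set_eq_iff unit_in_eta_iff)
  moreover have "m = \<Union>S \<longleftrightarrow> (\<forall>x\<in>X. x \<in> m \<longleftrightarrow> (\<exists>s\<in>S. x \<in> s))"
    using assms by blast
  ultimately show ?thesis
    by (simp only: is_sup_Pow[OF assms(1)] Pow_UNIV is_sup_UNIV)
qed

lemma C_hom_eta:
  assumes "x \<in> X"
  shows "C_hom II JJ (Pow X) (\<subseteq>) P1 (\<subseteq>) (eta X x)"
  unfolding C_hom_def
proof (intro conjI ballI allI impI)
  fix I y m assume "y \<in> I \<rightarrow> Pow X" and "is_inf (Pow X) (\<subseteq>) (y ` I) m"
  moreover have "m \<subseteq> X" using calculation(2) by (simp add: is_inf_def)
  ultimately show "is_inf P1 (\<subseteq>) ((eta X x \<circ> y) ` I) (eta X x m)"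
    using assms is_inf_Pow_pointwise[of "y ` I" X m] by (auto simp: image_comp)
next
  fix I y m assume "y \<in> I \<rightarrow> Pow X" and "is_sup (Pow X) (\<subseteq>) (y ` I) m"
  moreover have "m \<subseteq> X" using calculation(2) by (simp add: is_sup_def)
  ultimately show "is_sup P1 (\<subseteq>) ((eta X x \<circ> y) ` I) (eta X x m)"
    using assms is_sup_Pow_pointwise[of "y ` I" X m] by (auto simp: image_comp)
qed (auto simp: eta_def)

lemma C_hom_into_Pow:
  assumes \<phi>: "\<phi> \<in> A \<rightarrow>\<^sub>E Pow X"
    and pointwise: "\<And>x. x \<in> X \<Longrightarrow> C_hom II JJ A le P1 (\<subseteq>) (restrict (eta X x \<circ> \<phi>) A)"
  shows "C_hom II JJ A le (Pow X) (\<subseteq>) \<phi>"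
proof -
  have img: "(restrict (eta X x \<circ> \<phi>) A \<circ> y) ` I = eta X x ` (\<phi> \<circ> y) ` I" if "y \<in> I \<rightarrow> A" for x y I
    using that by (auto simp: image_comp)
  have sub: "(\<phi> \<circ> y) ` I \<subseteq> Pow X" if "y \<in> I \<rightarrow> A" for y I
    using that \<phi> by auto
  show ?thesis
    unfolding C_hom_def
  proof (intro conjI ballI allI impI)
    fix a b assume ab: "a \<in> A" "b \<in> A" "le a b"
    have le: "eta X x (\<phi> a) \<subseteq> eta X x (\<phi> b)" if "x \<in> X" for x
      using pointwise[OF that] ab unfolding C_hom_def by auto
    have "\<phi> a \<subseteq> X" "\<phi> b \<subseteq> X" using \<phi> ab by auto
    then show "\<phi> a \<subseteq> \<phi> b"
      using le unit_in_eta_iff by (metis subset_iff)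
  next
    fix I y m assume I: "I \<in> II" and y: "y \<in> I \<rightarrow> A" and inf: "is_inf A le (y ` I) m"
    have "m \<in> A" using inf by (simp add: is_inf_def)
    then have "is_inf P1 (\<subseteq>) (eta X x ` (\<phi> \<circ> y) ` I) (eta X x (\<phi> m))" if "x \<in> X" for x
      using pointwise[OF that] I y inf img[OF y] unfolding C_hom_def by force
    moreover have "\<phi> m \<subseteq> X" using \<phi> \<open>m \<in> A\<close> by auto
    ultimately show "is_inf (Pow X) (\<subseteq>) ((\<phi> \<circ> y) ` I) (\<phi> m)"
      using is_inf_Pow_pointwise[OF sub[OF y]] by blast
  next
    fix I y m assume I: "I \<in> JJ" and y: "y \<in> I \<rightarrow> A" and sup: "is_sup A le (y ` I) m"
    have "m \<in> A" using sup by (simp add: is_sup_def)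
    then have "is_sup P1 (\<subseteq>) (eta X x ` (\<phi> \<circ> y) ` I) (eta X x (\<phi> m))" if "x \<in> X" for x
      using pointwise[OF that] I y sup img[OF y] unfolding C_hom_def by force
    moreover have "\<phi> m \<subseteq> X" using \<phi> \<open>m \<in> A\<close> by auto
    ultimately show "is_sup (Pow X) (\<subseteq>) ((\<phi> \<circ> y) ` I) (\<phi> m)"
      using is_sup_Pow_pointwise[OF sub[OF y]] by blast
  qed (use \<phi> in simp)
qed

(* The single-map counterpart of lattice_homs, which is a property of a whole hom-set; the
   evaluations eta X x have it outright. *)
definition preserves_finite_infs :: "'a set \<Rightarrow> ('a \<Rightarrow> 'a \<Rightarrow> bool) \<Rightarrow> 'b set \<Rightarrow> ('b \<Rightarrow> 'b \<Rightarrow> bool)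
     \<Rightarrow> ('a \<Rightarrow> 'b) \<Rightarrow> bool" where
  "preserves_finite_infs A leA B leB \<phi> \<longleftrightarrow>
     (\<forall>S m. S \<subseteq> A \<longrightarrow> finite S \<longrightarrow> is_inf A leA S m \<longrightarrow> is_inf B leB (\<phi> ` S) (\<phi> m))"

lemma preserves_finite_infs_if_lattice_homs:
  "lattice_homs II JJ A leA B leB \<Longrightarrow> C_hom II JJ A leA B leB \<phi> \<Longrightarrow> preserves_finite_infs A leA B leB \<phi>"
  unfolding lattice_homs_def preserves_finite_infs_def by blast

lemma preserves_finite_infs_eta: "x \<in> X \<Longrightarrow> preserves_finite_infs (Pow X) (\<subseteq>) P1 (\<subseteq>) (eta X x)"
  unfolding preserves_finite_infs_def
  by (metis is_inf_Pow_pointwise is_inf_def PowD)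

lemma lfilter_preimage:
  assumes hom: "C_hom II JJ A leA B leB \<phi>" and infs: "preserves_finite_infs A leA B leB \<phi>"
    and A: "bounded_lattice A leA" and F: "lfilter B leB F"
  shows "lfilter A leA {a\<in>A. \<phi> a \<in> F}"
proof -
  have \<phi>: "\<phi> \<in> A \<rightarrow>\<^sub>E B" and mono: "\<forall>a\<in>A. \<forall>b\<in>A. leA a b \<longrightarrow> leB (\<phi> a) (\<phi> b)"
    using hom unfolding C_hom_def by auto
  have inf: "is_inf B leB (\<phi> ` S) (\<phi> m)" if "S \<subseteq> A" "finite S" "is_inf A leA S m" for S m
    using infs that unfolding preserves_finite_infs_def by blast
  obtain t where t: "is_inf A leA {} t" using A unfolding bounded_lattice_def by blast
  have top: "is_inf B leB {} (\<phi> t)" using inf[OF _ _ t] by simp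
  obtain y where y: "y \<in> F" using F unfolding lfilter_def by blast
  have "y \<in> B" using F y unfolding lfilter_def by blast
  then have "leB y (\<phi> t)" using top unfolding is_inf_def by blast
  moreover have "\<phi> t \<in> B" using top unfolding is_inf_def by blast
  ultimately have "\<phi> t \<in> F" using F y unfolding lfilter_def by blast
  moreover have "t \<in> A" using t unfolding is_inf_def by blast
  ultimately have nonempty: "{a\<in>A. \<phi> a \<in> F} \<noteq> {}" by blast
  have up: "b \<in> {a\<in>A. \<phi> a \<in> F}" if a: "a \<in> {a\<in>A. \<phi> a \<in> F}" and b: "b \<in> A" and ab: "leA a b" for a b
  proof -
    have "leB (\<phi> a) (\<phi> b)" using mono a b ab by blast
    moreover have "\<phi> b \<in> B" using \<phi> b by auto
    ultimately show ?thesis using F a b unfolding lfilter_def by blast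
  qed
  have meet: "m \<in> {a\<in>A. \<phi> a \<in> F}"
    if a: "a \<in> {a\<in>A. \<phi> a \<in> F}" and b: "b \<in> {a\<in>A. \<phi> a \<in> F}" and m: "is_inf A leA {a, b} m" for a b m
  proof -
    have "is_inf B leB {\<phi> a, \<phi> b} (\<phi> m)" using inf[OF _ _ m] a b by simp
    then have "\<phi> m \<in> F" using F a b unfolding lfilter_def by blast
    moreover have "m \<in> A" using m unfolding is_inf_def by blast
    ultimately show ?thesis by blast
  qed
  show ?thesis unfolding lfilter_def using nonempty up meet by blast
qed

lemma C_hom_comp:
  assumes "C_hom II JJ A leA B leB \<phi>" "C_hom II JJ B leB C leC \<chi>"
  shows "C_hom II JJ A leA C leC (restrict (\<chi> \<circ> \<phi>) A)"
proof -
  have \<phi>: "\<phi> \<in> A \<rightarrow>\<^sub>E B" and \<chi>: "\<chi> \<in> B \<rightarrow>\<^sub>E C" using assms unfolding C_hom_def by auto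
  have img: "(restrict (\<chi> \<circ> \<phi>) A \<circ> x) ` I = (\<chi> \<circ> (\<phi> \<circ> x)) ` I" if "x \<in> I \<rightarrow> A" for x I
    using that by auto
  have \<phi>x: "\<phi> \<circ> x \<in> I \<rightarrow> B" if "x \<in> I \<rightarrow> A" for x I using that \<phi> by auto
  show ?thesis
    unfolding C_hom_def
  proof (intro conjI ballI allI impI)
    show "restrict (\<chi> \<circ> \<phi>) A \<in> A \<rightarrow>\<^sub>E C" using \<phi> \<chi> by auto
  next
    fix a b assume ab: "a \<in> A" "b \<in> A" "leA a b"
    have "leB (\<phi> a) (\<phi> b)" using assms(1) ab unfolding C_hom_def by blast
    moreover have "\<phi> a \<in> B" "\<phi> b \<in> B" using \<phi> ab by auto
    ultimately have "leC (\<chi> (\<phi> a)) (\<chi> (\<phi> b))" using assms(2) unfolding C_hom_def by blast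
    then show "leC (restrict (\<chi> \<circ> \<phi>) A a) (restrict (\<chi> \<circ> \<phi>) A b)" using ab by simp
  next
    fix I x m assume I: "I \<in> II" and x: "x \<in> I \<rightarrow> A" and m: "is_inf A leA (x ` I) m"
    have "is_inf B leB ((\<phi> \<circ> x) ` I) (\<phi> m)" using assms(1) I x m unfolding C_hom_def by blast
    then have "is_inf C leC ((\<chi> \<circ> (\<phi> \<circ> x)) ` I) (\<chi> (\<phi> m))"
      using assms(2) I \<phi>x[OF x] unfolding C_hom_def by blast
    moreover have "m \<in> A" using m unfolding is_inf_def by auto
    ultimately show "is_inf C leC ((restrict (\<chi> \<circ> \<phi>) A \<circ> x) ` I) (restrict (\<chi> \<circ> \<phi>) A m)"
      using img[OF x] by simp
  next
    fix I x m assume I: "I \<in> JJ" and x: "x \<in> I \<rightarrow> A" and m: "is_sup A leA (x ` I) m"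
    have "is_sup B leB ((\<phi> \<circ> x) ` I) (\<phi> m)" using assms(1) I x m unfolding C_hom_def by blast
    then have "is_sup C leC ((\<chi> \<circ> (\<phi> \<circ> x)) ` I) (\<chi> (\<phi> m))"
      using assms(2) I \<phi>x[OF x] unfolding C_hom_def by blast
    moreover have "m \<in> A" using m unfolding is_sup_def by auto
    ultimately show "is_sup C leC ((restrict (\<chi> \<circ> \<phi>) A \<circ> x) ` I) (restrict (\<chi> \<circ> \<phi>) A m)"
      using img[OF x] by simp
  qed
qed

lemma conv_hom_funcset: "f \<in> conv_hom X cX Y cY \<Longrightarrow> f \<in> X \<rightarrow>\<^sub>E Y"
  unfolding conv_hom_def by simp

lemma cconv_hom_funcset: "\<phi> \<in> cconv_hom II JJ A leA limA B leB limB \<Longrightarrow> \<phi> \<in> A \<rightarrow>\<^sub>E B"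
  unfolding cconv_hom_def C_hom_def by simp

lemma cconv_hom_comp:
  assumes A: "conv_obj A leA limA" and B: "conv_obj B leB limB" and C: "conv_obj C leC limC"
    and \<phi>: "\<phi> \<in> cconv_hom II JJ A leA limA B leB limB" and \<chi>: "\<chi> \<in> cconv_hom II JJ B leB limB C leC limC"
    and \<phi>_infs: "preserves_finite_infs A leA B leB \<phi>" and \<chi>_infs: "preserves_finite_infs B leB C leC \<chi>"
  shows "restrict (\<chi> \<circ> \<phi>) A \<in> cconv_hom II JJ A leA limA C leC limC"
proof -
  have \<phi>_hom: "C_hom II JJ A leA B leB \<phi>" and \<phi>_cont: "continuous_map A limA B leB limB \<phi>"
    and \<chi>_hom: "C_hom II JJ B leB C leC \<chi>" and \<chi>_cont: "continuous_map B limB C leC limC \<chi>"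
    using \<phi> \<chi> unfolding cconv_hom_def by auto
  have \<phi>_fun: "\<phi> \<in> A \<rightarrow>\<^sub>E B" and \<chi>_fun: "\<chi> \<in> B \<rightarrow>\<^sub>E C"
    using \<phi>_hom \<chi>_hom unfolding C_hom_def by auto
  have "leC (limC F) (restrict (\<chi> \<circ> \<phi>) A (limA {a \<in> A. restrict (\<chi> \<circ> \<phi>) A a \<in> F}))"
    if F: "lfilter C leC F" for F
  proof -
    define G where "G = {b\<in>B. \<chi> b \<in> F}"
    define H where "H = {a\<in>A. \<phi> a \<in> G}"
    have G: "lfilter B leB G"
      unfolding G_def by (rule lfilter_preimage[OF \<chi>_hom \<chi>_infs conv_obj_bounded_lattice[OF B] F])
    have H: "lfilter A leA H"
      unfolding H_def by (rule lfilter_preimage[OF \<phi>_hom \<phi>_infs conv_obj_bounded_lattice[OF A] G])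
    have limH: "limA H \<in> A" and limG: "limB G \<in> B" and limF: "limC F \<in> C"
      using conv_obj_lim A B C G H F by blast+
    have "leC (limC F) (\<chi> (limB G))"
      using \<chi>_cont F unfolding continuous_map_def G_def by blast
    moreover have "leB (limB G) (\<phi> (limA H))"
      using \<phi>_cont G unfolding continuous_map_def H_def by blast
    then have "leC (\<chi> (limB G)) (\<chi> (\<phi> (limA H)))"
      using \<chi>_hom limG limH \<phi>_fun unfolding C_hom_def by blast
    ultimately have "leC (limC F) (\<chi> (\<phi> (limA H)))"
      using bounded_lattice_trans[OF conv_obj_bounded_lattice[OF C]] limF limG limH \<phi>_fun \<chi>_fun
      by (meson PiE_mem)
    moreover have "{a \<in> A. restrict (\<chi> \<circ> \<phi>) A a \<in> F} = H"
      unfolding H_def G_def using \<phi>_fun by auto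
    ultimately show ?thesis using limH by simp
  qed
  then show ?thesis
    using C_hom_comp[OF \<phi>_hom \<chi>_hom] unfolding cconv_hom_def continuous_map_def by blast
qed

lemma pt_C_hom: "\<chi> \<in> pt II JJ A le lim \<Longrightarrow> C_hom II JJ A le P1 (\<subseteq>) \<chi>"
  unfolding pt_def cconv_hom_def by auto

lemma pt_continuous:
  "\<chi> \<in> pt II JJ A le lim \<Longrightarrow> lfilter P1 (\<subseteq>) F \<Longrightarrow> \<chi> (lim {a\<in>A. \<chi> a \<in> F}) = UNIV"
  unfolding pt_def cconv_hom_def continuous_map_def by auto

lemma pt_preserves_finite_infs:
  "lattice_homs II JJ A le P1 (\<subseteq>) \<Longrightarrow> \<chi> \<in> pt II JJ A le lim \<Longrightarrow> preserves_finite_infs A le P1 (\<subseteq>) \<chi>"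
  using preserves_finite_infs_if_lattice_homs pt_C_hom by blast

lemma pt_comp:
  assumes A: "conv_obj A leA limA" and B: "conv_obj B leB limB"
    and \<phi>: "\<phi> \<in> cconv_hom II JJ A leA limA B leB limB" and \<chi>: "\<chi> \<in> pt II JJ B leB limB"
    and \<phi>_infs: "preserves_finite_infs A leA B leB \<phi>" and \<chi>_infs: "preserves_finite_infs B leB P1 (\<subseteq>) \<chi>"
  shows "restrict (\<chi> \<circ> \<phi>) A \<in> pt II JJ A leA limA"
  using cconv_hom_comp[OF A B conv_obj_P1 \<phi> \<chi>[unfolded pt_def] \<phi>_infs \<chi>_infs] unfolding pt_def .

lemma bul_mono:
  assumes "a \<in> A" "b \<in> A" "le a b"
  shows "bul II JJ A le lim a \<subseteq> bul II JJ A le lim b"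
proof
  fix \<chi> assume "\<chi> \<in> bul II JJ A le lim a"
  then have \<chi>: "\<chi> \<in> pt II JJ A le lim" and "\<chi> a = UNIV" unfolding bul_def by auto
  moreover have "\<chi> a \<subseteq> \<chi> b" using pt_C_hom[OF \<chi>] assms unfolding C_hom_def by blast
  ultimately show "\<chi> \<in> bul II JJ A le lim b" unfolding bul_def by auto
qed

lemma bul_subset_pt: "bul II JJ A le lim l \<subseteq> pt II JJ A le lim"
  unfolding bul_def by auto

lemma lfilter_circ:
  assumes A: "bounded_lattice A le" and points: "lattice_homs II JJ A le P1 (\<subseteq>)"
    and F: "lfilter (Pow (pt II JJ A le lim)) (\<subseteq>) F"
  shows "lfilter A le (circ II JJ A le lim F)"
proof -
  have infs: "is_inf P1 (\<subseteq>) (\<chi> ` S) (\<chi> m)"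
    if "\<chi> \<in> pt II JJ A le lim" "S \<subseteq> A" "finite S" "is_inf A le S m" for \<chi> S m
    using that pt_preserves_finite_infs[OF points] unfolding preserves_finite_infs_def by blast
  have F_up: "T \<in> F" if "S \<in> F" "S \<subseteq> T" "T \<subseteq> pt II JJ A le lim" for S T
    using F that unfolding lfilter_Pow by blast
  have F_meet: "S \<inter> T \<in> F" if "S \<in> F" "T \<in> F" for S T
    using F that unfolding lfilter_Pow by simp
  obtain t where t: "is_inf A le {} t" using A unfolding bounded_lattice_def by blast
  then have "bul II JJ A le lim t = pt II JJ A le lim"
    using infs[of _ "{}" t] unfolding bul_def by (auto simp: is_inf_UNIV)
  then have "t \<in> circ II JJ A le lim F"
    using t lfilter_Pow_top[OF F] unfolding circ_def is_inf_def by auto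
  then have nonempty: "circ II JJ A le lim F \<noteq> {}" by auto
  have up: "b \<in> circ II JJ A le lim F" if a: "a \<in> circ II JJ A le lim F" and "b \<in> A" "le a b" for a b
  proof -
    have "a \<in> A" "bul II JJ A le lim a \<in> F" using a unfolding circ_def by auto
    then have "bul II JJ A le lim b \<in> F"
      using F_up bul_mono[of a A b le] bul_subset_pt that(2,3) by metis
    then show ?thesis using \<open>b \<in> A\<close> unfolding circ_def by simp
  qed
  have meet: "m \<in> circ II JJ A le lim F"
    if a: "a \<in> circ II JJ A le lim F" and b: "b \<in> circ II JJ A le lim F"
      and m: "is_inf A le {a, b} m" for a b m
  proof -
    have "a \<in> A" "b \<in> A" "m \<in> A" using a b m unfolding circ_def is_inf_def by auto
    then have "bul II JJ A le lim m = bul II JJ A le lim a \<inter> bul II JJ A le lim b"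
      using infs[of _ "{a, b}" m] m unfolding bul_def by (auto simp: is_inf_UNIV)
    then show ?thesis using a b \<open>m \<in> A\<close> F_meet unfolding circ_def by auto
  qed
  have "circ II JJ A le lim F \<subseteq> A" unfolding circ_def by auto
  then show ?thesis unfolding lfilter_def using nonempty up meet by blast
qed

lemma pt_conv_space:
  assumes A: "conv_obj A le lim" and points: "lattice_homs II JJ A le P1 (\<subseteq>)"
  shows "conv_space (pt II JJ A le lim) (ptconv II JJ A le lim)"
  unfolding conv_space_def
proof (intro conjI allI impI ballI)
  fix F \<chi> assume "ptconv II JJ A le lim F \<chi>"
  then show "lfilter (Pow (pt II JJ A le lim)) (\<subseteq>) F" "\<chi> \<in> pt II JJ A le lim"
    unfolding ptconv_def bul_def by auto
next
  fix \<chi> assume \<chi>: "\<chi> \<in> pt II JJ A le lim"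
  have "lfilter (Pow (pt II JJ A le lim)) (\<subseteq>) (dot (pt II JJ A le lim) \<chi>)"
    unfolding lfilter_Pow dot_def using \<chi> by auto
  moreover have "circ II JJ A le lim (dot (pt II JJ A le lim) \<chi>) = {l \<in> A. \<chi> l \<in> {UNIV}}"
    unfolding circ_def dot_def bul_def using \<chi> by auto
  moreover have "lfilter P1 (\<subseteq>) {UNIV}"
    unfolding lfilter_Pow by auto
  then have "\<chi> (lim {l \<in> A. \<chi> l \<in> {UNIV}}) = UNIV" by (rule pt_continuous[OF \<chi>])
  ultimately show "ptconv II JJ A le lim (dot (pt II JJ A le lim) \<chi>) \<chi>"
    unfolding ptconv_def bul_def using \<chi> by simp
next
  fix F G \<chi>
  assume "ptconv II JJ A le lim F \<chi> \<and> lfilter (Pow (pt II JJ A le lim)) (\<subseteq>) G \<and> F \<subseteq> G"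
  then have F: "lfilter (Pow (pt II JJ A le lim)) (\<subseteq>) F" and G: "lfilter (Pow (pt II JJ A le lim)) (\<subseteq>) G"
    and "F \<subseteq> G" and \<chi>: "\<chi> \<in> bul II JJ A le lim (lim (circ II JJ A le lim F))"
    unfolding ptconv_def by auto
  have "lfilter A le (circ II JJ A le lim F)" "lfilter A le (circ II JJ A le lim G)"
    using lfilter_circ[OF conv_obj_bounded_lattice[OF A] points] F G by auto
  moreover have "circ II JJ A le lim F \<subseteq> circ II JJ A le lim G"
    unfolding circ_def using \<open>F \<subseteq> G\<close> by auto
  ultimately have "bul II JJ A le lim (lim (circ II JJ A le lim F))
      \<subseteq> bul II JJ A le lim (lim (circ II JJ A le lim G))"
    by (intro bul_mono conv_obj_lim[OF A] conv_obj_mono[OF A])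
  then show "ptconv II JJ A le lim G \<chi>" using \<chi> G unfolding ptconv_def by auto
qed

lemma eta_pt:
  assumes X: "conv_space X c" and x: "x \<in> X"
  shows "eta X x \<in> pt II JJ (Pow X) (\<subseteq>) (Plim X c)"
proof -
  have "UNIV \<subseteq> eta X x (Plim X c {S \<in> Pow X. eta X x S \<in> F})" if F: "lfilter P1 (\<subseteq>) F" for F
  proof -
    define Q where "Q = {S \<in> Pow X. eta X x S \<in> F}"
    have "lfilter (Pow X) (\<subseteq>) Q"
      unfolding Q_def using lfilter_preimage[OF C_hom_eta[OF x] preserves_finite_infs_eta[OF x]]
        bounded_lattice_Pow F by blast
    moreover have "dot X x \<subseteq> Q"
      unfolding dot_def Q_def eta_def using lfilter_Pow_top[OF F] by auto
    moreover have "c (dot X x) x" using X x unfolding conv_space_def by blast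
    ultimately have "c Q x" using X unfolding conv_space_def by blast
    then show ?thesis using x unfolding Q_def Plim_def eta_def by auto
  qed
  then show ?thesis
    using C_hom_eta[OF x] unfolding pt_def cconv_hom_def continuous_map_def by blast
qed

lemma eta_comp_Pmap:
  assumes "x \<in> X"
  shows "restrict (eta X x \<circ> Pmap X Y f) (Pow Y) = eta Y (f x)"
  using assms unfolding eta_def Pmap_def by (intro restrict_ext) auto

lemma Pmap_cconv_hom:
  assumes f: "f \<in> conv_hom X cX Y cY"
  shows "Pmap X Y f \<in> cconv_hom II JJ (Pow Y) (\<subseteq>) (Plim Y cY) (Pow X) (\<subseteq>) (Plim X cX)"
proof -
  have f_fun: "f \<in> X \<rightarrow> Y" and f_cont: "\<And>F x. cX F x \<Longrightarrow> cY (fimg X Y f F) (f x)"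
    using f unfolding conv_hom_def PiE_def by auto
  have "C_hom II JJ (Pow Y) (\<subseteq>) P1 (\<subseteq>) (restrict (eta X x \<circ> Pmap X Y f) (Pow Y))" if "x \<in> X" for x
  proof -
    have "f x \<in> Y" using f_fun that by blast
    then show ?thesis unfolding eta_comp_Pmap[OF that] by (rule C_hom_eta)
  qed
  moreover have "Pmap X Y f \<in> Pow Y \<rightarrow>\<^sub>E Pow X" unfolding Pmap_def by auto
  ultimately have "C_hom II JJ (Pow Y) (\<subseteq>) (Pow X) (\<subseteq>) (Pmap X Y f)"
    using C_hom_into_Pow by blast
  moreover have "Plim X cX F \<subseteq> Pmap X Y f (Plim Y cY {S \<in> Pow Y. Pmap X Y f S \<in> F})" for F
  proof
    fix x assume "x \<in> Plim X cX F"
    then have x: "x \<in> X" and "cY (fimg X Y f F) (f x)" using f_cont unfolding Plim_def by auto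
    moreover have "{S \<in> Pow Y. Pmap X Y f S \<in> F} = fimg X Y f F"
      unfolding fimg_def Pmap_def by auto
    ultimately have "f x \<in> Plim Y cY {S \<in> Pow Y. Pmap X Y f S \<in> F}"
      using f_fun unfolding Plim_def by auto
    moreover have "Plim Y cY {S \<in> Pow Y. Pmap X Y f S \<in> F} \<subseteq> Y" unfolding Plim_def by auto
    ultimately show "x \<in> Pmap X Y f (Plim Y cY {S \<in> Pow Y. Pmap X Y f S \<in> F})"
      using x unfolding Pmap_def by simp
  qed
  ultimately show ?thesis unfolding cconv_hom_def continuous_map_def by simp
qed

lemma transp_eq:
  assumes "conv_space X c"
  shows "transp II JJ X c A \<phi> = (\<lambda>x\<in>X. restrict (eta X x \<circ> \<phi>) A)"
  unfolding transp_def ptmap_def by (rule restrict_ext) (simp add: eta_pt[OF assms])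

lemma eta_comp_in_pt:
  assumes X: "conv_space X c" and A: "conv_obj A le lim" and x: "x \<in> X"
    and \<phi>: "\<phi> \<in> cconv_hom II JJ A le lim (Pow X) (\<subseteq>) (Plim X c)"
    and \<phi>_infs: "preserves_finite_infs A le (Pow X) (\<subseteq>) \<phi>"
  shows "restrict (eta X x \<circ> \<phi>) A \<in> pt II JJ A le lim"
  by (rule pt_comp[OF A conv_obj_Pow[OF X] \<phi> eta_pt[OF X x] \<phi>_infs preserves_finite_infs_eta[OF x]])

definition transp_inv :: "'i set set \<Rightarrow> 'j set set \<Rightarrow> 'x set \<Rightarrow> 'a set \<Rightarrow> ('a \<Rightarrow> 'a \<Rightarrow> bool)
     \<Rightarrow> ('a set \<Rightarrow> 'a) \<Rightarrow> ('x \<Rightarrow> 'a \<Rightarrow> unit set) \<Rightarrow> 'a \<Rightarrow> 'x set" where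
  "transp_inv II JJ X A le lim g = (\<lambda>l\<in>A. {x \<in> X. g x \<in> bul II JJ A le lim l})"

lemma eta_comp_transp_inv:
  assumes "x \<in> X" "g x \<in> pt II JJ A le lim"
  shows "restrict (eta X x \<circ> transp_inv II JJ X A le lim g) A = g x"
proof
  fix l
  have "g x \<in> A \<rightarrow>\<^sub>E P1" using assms(2) pt_C_hom unfolding C_hom_def by blast
  then show "restrict (eta X x \<circ> transp_inv II JJ X A le lim g) A l = g x l"
    using assms unit_set_cases[of "g x l"] by (auto simp: transp_inv_def bul_def eta_def)
qed

lemma transp_transp_inv:
  assumes "conv_space X c" "g \<in> X \<rightarrow>\<^sub>E pt II JJ A le lim"
  shows "transp II JJ X c A (transp_inv II JJ X A le lim g) = g"
  using assms eta_comp_transp_inv[of _ X g] unfolding transp_eq[OF assms(1)] by fastforce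

lemma transp_inv_transp:
  assumes "conv_space X c" "\<phi> \<in> A \<rightarrow>\<^sub>E Pow X"
    and points: "\<And>x. x \<in> X \<Longrightarrow> restrict (eta X x \<circ> \<phi>) A \<in> pt II JJ A le lim"
  shows "transp_inv II JJ X A le lim (transp II JJ X c A \<phi>) = \<phi>"
proof
  fix l
  show "transp_inv II JJ X A le lim (transp II JJ X c A \<phi>) l = \<phi> l"
    using assms(2) points unfolding transp_inv_def transp_eq[OF assms(1)] bul_def
    by (auto simp: eta_def)
qed

lemma circ_fimg:
  "circ II JJ A le lim (fimg X (pt II JJ A le lim) g F) = {l \<in> A. transp_inv II JJ X A le lim g l \<in> F}"
  unfolding circ_def fimg_def transp_inv_def using bul_subset_pt[of II JJ A le lim] by auto

lemma conv_hom_pt_iff_continuous: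
  assumes X: "conv_space X c" and A: "conv_obj A le lim" and points: "lattice_homs II JJ A le P1 (\<subseteq>)"
    and g: "g \<in> X \<rightarrow>\<^sub>E pt II JJ A le lim"
  shows "g \<in> conv_hom X c (pt II JJ A le lim) (ptconv II JJ A le lim)
    \<longleftrightarrow> continuous_map A lim (Pow X) (\<subseteq>) (Plim X c) (transp_inv II JJ X A le lim g)"
proof -
  let ?\<phi> = "transp_inv II JJ X A le lim g"
  have ptconv_iff: "ptconv II JJ A le lim (fimg X (pt II JJ A le lim) g F) (g x)
      \<longleftrightarrow> x \<in> ?\<phi> (lim {l \<in> A. ?\<phi> l \<in> F})" if "c F x" for F x
  proof -
    have F: "lfilter (Pow X) (\<subseteq>) F" and "x \<in> X" using conv_space_D[OF X that] by auto
    have "g \<in> X \<rightarrow> pt II JJ A le lim" using g unfolding PiE_def by blast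
    then have "lfilter (Pow (pt II JJ A le lim)) (\<subseteq>) (fimg X (pt II JJ A le lim) g F)"
      using lfilter_fimg F by blast
    moreover from this have "lim {l \<in> A. ?\<phi> l \<in> F} \<in> A"
      using conv_obj_lim[OF A] lfilter_circ[OF conv_obj_bounded_lattice[OF A] points] circ_fimg by metis
    ultimately show ?thesis
      unfolding ptconv_def circ_fimg using \<open>x \<in> X\<close> by (simp add: transp_inv_def)
  qed
  have "g \<in> conv_hom X c (pt II JJ A le lim) (ptconv II JJ A le lim)
      \<longleftrightarrow> (\<forall>F x. c F x \<longrightarrow> x \<in> ?\<phi> (lim {l \<in> A. ?\<phi> l \<in> F}))"
    using g ptconv_iff unfolding conv_hom_def by auto
  also have "\<dots> \<longleftrightarrow> continuous_map A lim (Pow X) (\<subseteq>) (Plim X c) ?\<phi>"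
    unfolding continuous_map_def Plim_def using conv_space_D[OF X] by blast
  finally show ?thesis .
qed

lemma transp_conv_hom:
  assumes X: "conv_space X c" and A: "conv_obj A le lim" and points: "lattice_homs II JJ A le P1 (\<subseteq>)"
    and homs: "lattice_homs II JJ A le (Pow X) (\<subseteq>)"
    and \<phi>: "\<phi> \<in> cconv_hom II JJ A le lim (Pow X) (\<subseteq>) (Plim X c)"
  shows "transp II JJ X c A \<phi> \<in> conv_hom X c (pt II JJ A le lim) (ptconv II JJ A le lim)"
proof -
  have \<phi>_hom: "C_hom II JJ A le (Pow X) (\<subseteq>) \<phi>" and \<phi>_cont: "continuous_map A lim (Pow X) (\<subseteq>) (Plim X c) \<phi>"
    using \<phi> unfolding cconv_hom_def by auto
  have pts: "restrict (eta X x \<circ> \<phi>) A \<in> pt II JJ A le lim" if "x \<in> X" for x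
    using eta_comp_in_pt[OF X A that \<phi> preserves_finite_infs_if_lattice_homs[OF homs \<phi>_hom]] .
  then have g: "transp II JJ X c A \<phi> \<in> X \<rightarrow>\<^sub>E pt II JJ A le lim"
    unfolding transp_eq[OF X] by auto
  have "transp_inv II JJ X A le lim (transp II JJ X c A \<phi>) = \<phi>"
    using transp_inv_transp[OF X _ pts] \<phi>_hom unfolding C_hom_def by blast
  then show ?thesis
    using conv_hom_pt_iff_continuous[OF X A points g] \<phi>_cont by simp
qed

lemma transp_inv_cconv_hom:
  assumes X: "conv_space X c" and A: "conv_obj A le lim" and points: "lattice_homs II JJ A le P1 (\<subseteq>)"
    and g: "g \<in> conv_hom X c (pt II JJ A le lim) (ptconv II JJ A le lim)"
  shows "transp_inv II JJ X A le lim g \<in> cconv_hom II JJ A le lim (Pow X) (\<subseteq>) (Plim X c)"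
proof -
  have g_fun: "g \<in> X \<rightarrow>\<^sub>E pt II JJ A le lim" using g unfolding conv_hom_def by simp
  have "transp_inv II JJ X A le lim g \<in> A \<rightarrow>\<^sub>E Pow X" unfolding transp_inv_def by auto
  moreover have "C_hom II JJ A le P1 (\<subseteq>) (restrict (eta X x \<circ> transp_inv II JJ X A le lim g) A)"
    if "x \<in> X" for x
    using pt_C_hom eta_comp_transp_inv[OF that] g_fun that by (metis PiE_mem)
  ultimately have "C_hom II JJ A le (Pow X) (\<subseteq>) (transp_inv II JJ X A le lim g)"
    by (rule C_hom_into_Pow)
  moreover have "continuous_map A lim (Pow X) (\<subseteq>) (Plim X c) (transp_inv II JJ X A le lim g)"
    using conv_hom_pt_iff_continuous[OF X A points g_fun] g by simp
  ultimately show ?thesis unfolding cconv_hom_def by simp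
qed

lemma bij_betw_transp:
  assumes X: "conv_space X c" and A: "conv_obj A le lim" and points: "lattice_homs II JJ A le P1 (\<subseteq>)"
    and homs: "lattice_homs II JJ A le (Pow X) (\<subseteq>)"
  shows "bij_betw (transp II JJ X c A) (cconv_hom II JJ A le lim (Pow X) (\<subseteq>) (Plim X c))
    (conv_hom X c (pt II JJ A le lim) (ptconv II JJ A le lim))"
proof (rule bij_betw_byWitness[where f' = "transp_inv II JJ X A le lim"])
  show "\<forall>\<phi> \<in> cconv_hom II JJ A le lim (Pow X) (\<subseteq>) (Plim X c).
      transp_inv II JJ X A le lim (transp II JJ X c A \<phi>) = \<phi>"
  proof
    fix \<phi> assume \<phi>: "\<phi> \<in> cconv_hom II JJ A le lim (Pow X) (\<subseteq>) (Plim X c)"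
    then have \<phi>_hom: "C_hom II JJ A le (Pow X) (\<subseteq>) \<phi>" unfolding cconv_hom_def by simp
    then have "\<phi> \<in> A \<rightarrow>\<^sub>E Pow X" unfolding C_hom_def by simp
    then show "transp_inv II JJ X A le lim (transp II JJ X c A \<phi>) = \<phi>"
      using transp_inv_transp[OF X] eta_comp_in_pt[OF X A _ \<phi>]
        preserves_finite_infs_if_lattice_homs[OF homs \<phi>_hom] by blast
  qed
  show "\<forall>g \<in> conv_hom X c (pt II JJ A le lim) (ptconv II JJ A le lim).
      transp II JJ X c A (transp_inv II JJ X A le lim g) = g"
    using transp_transp_inv[OF X] unfolding conv_hom_def by blast
qed (use transp_conv_hom[OF X A points homs] transp_inv_cconv_hom[OF X A points] in blast)+

lemma continuous_bul_comp:
  assumes L: "conv_obj L leL limL" and M: "conv_obj M leM limM"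
    and homs: "lattice_homs II JJ L leL M leM" and points: "lattice_homs II JJ M leM P1 (\<subseteq>)"
    and \<psi>: "\<psi> \<in> cconv_hom II JJ L leL limL M leM limM"
  shows "continuous_map L limL (Pow (pt II JJ M leM limM)) (\<subseteq>)
    (Plim (pt II JJ M leM limM) (ptconv II JJ M leM limM)) (\<lambda>l\<in>L. bul II JJ M leM limM (\<psi> l))"
  unfolding continuous_map_def
proof (intro allI impI)
  fix F assume F: "lfilter (Pow (pt II JJ M leM limM)) (\<subseteq>) F"
  let ?G = "circ II JJ M leM limM F"
  let ?H = "{l \<in> L. \<psi> l \<in> ?G}"
  have \<psi>_hom: "C_hom II JJ L leL M leM \<psi>" and \<psi>_cont: "continuous_map L limL M leM limM \<psi>"
    using \<psi> unfolding cconv_hom_def by auto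
  have \<psi>_fun: "\<psi> \<in> L \<rightarrow>\<^sub>E M" by (rule cconv_hom_funcset[OF \<psi>])
  have G: "lfilter M leM ?G" by (rule lfilter_circ[OF conv_obj_bounded_lattice[OF M] points F])
  have H_eq: "{l \<in> L. (\<lambda>l\<in>L. bul II JJ M leM limM (\<psi> l)) l \<in> F} = ?H"
    using \<psi>_fun unfolding circ_def by (auto simp: PiE_iff)
  have "lfilter L leL ?H"
    using lfilter_preimage[OF \<psi>_hom preserves_finite_infs_if_lattice_homs[OF homs \<psi>_hom]
        conv_obj_bounded_lattice[OF L] G] .
  then have limH: "limL ?H \<in> L" by (rule conv_obj_lim[OF L])
  have "leM (limM ?G) (\<psi> (limL ?H))"
    using \<psi>_cont G unfolding continuous_map_def by blast
  then have "bul II JJ M leM limM (limM ?G) \<subseteq> bul II JJ M leM limM (\<psi> (limL ?H))"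
    by (rule bul_mono[OF conv_obj_lim[OF M G] PiE_mem[OF \<psi>_fun limH]])
  then show "Plim (pt II JJ M leM limM) (ptconv II JJ M leM limM) F
      \<subseteq> (\<lambda>l\<in>L. bul II JJ M leM limM (\<psi> l)) (limL {l \<in> L. (\<lambda>l\<in>L. bul II JJ M leM limM (\<psi> l)) l \<in> F})"
    unfolding H_eq unfolding Plim_def ptconv_def using limH by auto
qed

lemma ptmap_conv_hom:
  assumes L: "conv_obj L leL limL" and M: "conv_obj M leM limM"
    and homs: "lattice_homs II JJ L leL M leM" and points_L: "lattice_homs II JJ L leL P1 (\<subseteq>)"
    and points_M: "lattice_homs II JJ M leM P1 (\<subseteq>)"
    and \<psi>: "\<psi> \<in> cconv_hom II JJ L leL limL M leM limM"
  shows "ptmap II JJ M leM limM L \<psi>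
    \<in> conv_hom (pt II JJ M leM limM) (ptconv II JJ M leM limM) (pt II JJ L leL limL) (ptconv II JJ L leL limL)"
proof -
  let ?ptM = "pt II JJ M leM limM" and ?g = "ptmap II JJ M leM limM L \<psi>"
  have "restrict (\<chi> \<circ> \<psi>) L \<in> pt II JJ L leL limL" if "\<chi> \<in> ?ptM" for \<chi>
    using pt_comp[OF L M \<psi> that] preserves_finite_infs_if_lattice_homs[OF homs]
      pt_preserves_finite_infs[OF points_M that] \<psi> unfolding cconv_hom_def by blast
  then have g: "?g \<in> ?ptM \<rightarrow>\<^sub>E pt II JJ L leL limL"
    unfolding ptmap_def by auto
  have "{\<chi> \<in> ?ptM. ?g \<chi> \<in> bul II JJ L leL limL l} = bul II JJ M leM limM (\<psi> l)" if "l \<in> L" for l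
    using that g unfolding bul_def ptmap_def by auto
  then have "transp_inv II JJ ?ptM L leL limL ?g = (\<lambda>l\<in>L. bul II JJ M leM limM (\<psi> l))"
    unfolding transp_inv_def by (intro restrict_ext) simp
  then show ?thesis
    using conv_hom_pt_iff_continuous[OF pt_conv_space[OF M points_M] L points_L g]
      continuous_bul_comp[OF L M homs points_M \<psi>] by simp
qed

lemma transp_Pmap_comp:
  assumes X: "conv_space X cX" and Y: "conv_space Y cY" and g: "g \<in> X \<rightarrow>\<^sub>E Y" and \<phi>: "\<phi> \<in> A \<rightarrow>\<^sub>E Pow Y"
  shows "transp II JJ X cX A (restrict (Pmap X Y g \<circ> \<phi>) A) = restrict (transp II JJ Y cY A \<phi> \<circ> g) X"
proof -
  have "restrict (eta X x \<circ> restrict (Pmap X Y g \<circ> \<phi>) A) A = transp II JJ Y cY A \<phi> (g x)"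
    if x: "x \<in> X" for x
  proof -
    have "eta X x (Pmap X Y g (\<phi> l)) = eta Y (g x) (\<phi> l)" if "l \<in> A" for l
    proof -
      have "\<phi> l \<subseteq> Y" using \<phi> that by auto
      then show ?thesis using fun_cong[OF eta_comp_Pmap[OF x, where Y=Y and f=g], of "\<phi> l"] by simp
    qed
    moreover have "transp II JJ Y cY A \<phi> (g x) = restrict (eta Y (g x) \<circ> \<phi>) A"
      using g x by (auto simp: transp_eq[OF Y])
    ultimately show ?thesis by (auto intro!: restrict_ext)
  qed
  then show ?thesis unfolding transp_eq[OF X] by (intro restrict_ext) simp
qed

lemma transp_comp_ptmap:
  assumes X: "conv_space X c" and \<psi>: "\<psi> \<in> L \<rightarrow>\<^sub>E M"
    and points: "\<And>x. x \<in> X \<Longrightarrow> restrict (eta X x \<circ> \<phi>) M \<in> pt II JJ M leM limM"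
  shows "transp II JJ X c L (restrict (\<phi> \<circ> \<psi>) L)
    = restrict (ptmap II JJ M leM limM L \<psi> \<circ> transp II JJ X c M \<phi>) X"
  unfolding transp_eq[OF X] ptmap_def using \<psi> points by (auto simp: PiE_iff intro!: restrict_ext)

theorem mainTheorem1:
  fixes II :: "'i set set" and JJ :: "'j set set"
    and L :: "'l set" and leL :: "'l \<Rightarrow> 'l \<Rightarrow> bool" and limL :: "'l set \<Rightarrow> 'l"
    and M :: "'m set" and leM :: "'m \<Rightarrow> 'm \<Rightarrow> bool" and limM :: "'m set \<Rightarrow> 'm"
    and X :: "'x set" and cX :: "'x set set \<Rightarrow> 'x \<Rightarrow> bool"
    and Y :: "'y set" and cY :: "'y set set \<Rightarrow> 'y \<Rightarrow> bool"
  assumes C: "lattice_cat_on II JJ L leL M leM X Y"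
    and L: "conv_obj L leL limL" and M: "conv_obj M leM limM"
    and X: "conv_space X cX" and Y: "conv_space Y cY"
  shows
    \<comment> \<open>P and pt are well defined on objects\<close>
    "conv_obj (Pow X) (\<subseteq>) (Plim X cX)
     \<and> conv_space (pt II JJ L leL limL) (ptconv II JJ L leL limL)
     \<comment> \<open>P and pt are well defined on morphisms\<close>
     \<and> (\<forall>f \<in> conv_hom X cX Y cY.
          Pmap X Y f \<in> cconv_hom II JJ (Pow Y) (\<subseteq>) (Plim Y cY) (Pow X) (\<subseteq>) (Plim X cX))
     \<and> (\<forall>\<psi> \<in> cconv_hom II JJ L leL limL M leM limM.
          ptmap II JJ M leM limM L \<psi>
            \<in> conv_hom (pt II JJ M leM limM) (ptconv II JJ M leM limM)
                       (pt II JJ L leL limL) (ptconv II JJ L leL limL))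
     \<comment> \<open>the hom-set bijection\<close>
     \<and> bij_betw (transp II JJ X cX L)
         (cconv_hom II JJ L leL limL (Pow X) (\<subseteq>) (Plim X cX))
         (conv_hom X cX (pt II JJ L leL limL) (ptconv II JJ L leL limL))
     \<comment> \<open>naturality in the Conv variable\<close>
     \<and> (\<forall>g \<in> conv_hom X cX Y cY. \<forall>\<phi> \<in> cconv_hom II JJ L leL limL (Pow Y) (\<subseteq>) (Plim Y cY).
          transp II JJ X cX L (restrict (Pmap X Y g \<circ> \<phi>) L)
            = restrict (transp II JJ Y cY L \<phi> \<circ> g) X)
     \<comment> \<open>naturality in the C^conv variable\<close>
     \<and> (\<forall>\<psi> \<in> cconv_hom II JJ L leL limL M leM limM.
        \<forall>\<phi> \<in> cconv_hom II JJ M leM limM (Pow X) (\<subseteq>) (Plim X cX).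
          transp II JJ X cX L (restrict (\<phi> \<circ> \<psi>) L)
            = restrict (ptmap II JJ M leM limM L \<psi> \<circ> transp II JJ X cX M \<phi>) X)"
proof -
  have points_L: "lattice_homs II JJ L leL P1 (\<subseteq>)" and points_M: "lattice_homs II JJ M leM P1 (\<subseteq>)"
    and homs_LM: "lattice_homs II JJ L leL M leM"
    and homs_LX: "lattice_homs II JJ L leL (Pow X) (\<subseteq>)" and homs_MX: "lattice_homs II JJ M leM (Pow X) (\<subseteq>)"
    using C unfolding lattice_cat_on_def by simp_all
  have eta_comp_in_pt_M: "restrict (eta X x \<circ> \<phi>) M \<in> pt II JJ M leM limM"
    if "\<phi> \<in> cconv_hom II JJ M leM limM (Pow X) (\<subseteq>) (Plim X cX)" "x \<in> X" for \<phi> x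
    using eta_comp_in_pt[OF X M that(2) that(1)] preserves_finite_infs_if_lattice_homs[OF homs_MX] that(1)
    unfolding cconv_hom_def by blast
  show ?thesis
    apply (intro conjI ballI)
    subgoal by (rule conv_obj_Pow[OF X])
    subgoal by (rule pt_conv_space[OF L points_L])
    subgoal by (rule Pmap_cconv_hom)
    subgoal by (rule ptmap_conv_hom[OF L M homs_LM points_L points_M])
    subgoal by (rule bij_betw_transp[OF X L points_L homs_LX])
    subgoal by (rule transp_Pmap_comp[OF X Y conv_hom_funcset cconv_hom_funcset])
    subgoal by (rule transp_comp_ptmap[OF X cconv_hom_funcset eta_comp_in_pt_M])
    done
qed

end
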